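(* Let $B_+=\{x\in\mathbb{R}^N:|x|\le1,\ x_N>0\}$, $\Sigma_1=\{x\in\partial B_+: x_N=0\}$, $\Sigma_2=\{x\in\partial B_+: x_N>0\}$, and let $\nu$ be the outward unit normal on $\Sigma_2$. Suppose $w\in C^2(\overline{B_+})$ satisfies $$-\Delta w\ge0\ \text{on }B_+,\qquad w=0\ \text{on }\Sigma_1,\qquad \frac{\partial w}{\partial\nu}=0\ \text{on }\Sigma_2.$$ If $w\not\equiv0$ in $B_+$, then $w>0$ in $B_+$ and $\frac{\partial w}{\partial x_N}>0$ on $\Sigma_1$. *)

theory Defs
  imports "HOL-Analysis.Analysis"
begin

text \<open>Points of R^N are vectors of type real^'n; the distinguished coordinate
  x_N is the coordinate k (an arbitrary but fixed index).\<close>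

definition Bplus :: "'n::finite \<Rightarrow> (real^'n) set" where
  "Bplus k = {x. norm x \<le> 1 \<and> x $ k > 0}"

definition Sigma1 :: "'n::finite \<Rightarrow> (real^'n) set" where
  "Sigma1 k = {x \<in> frontier (Bplus k). x $ k = 0}"

definition Sigma2 :: "'n::finite \<Rightarrow> (real^'n) set" where
  "Sigma2 k = {x \<in> frontier (Bplus k). x $ k > 0}"

definition outward_normal :: "real^'n::finite \<Rightarrow> real^'n" where
  "outward_normal x = x /\<^sub>R norm x"

definition dir_deriv :: "(real^'n::finite \<Rightarrow> real) \<Rightarrow> real^'n \<Rightarrow> real^'n \<Rightarrow> real" where
  "dir_deriv f v x = deriv (\<lambda>t. f (x + t *\<^sub>R v)) 0"

definition pd :: "'n::finite \<Rightarrow> (real^'n \<Rightarrow> real) \<Rightarrow> real^'n \<Rightarrow> real" where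
  "pd i f x = dir_deriv f (axis i 1) x"

definition C2_on :: "(real^'n::finite) set \<Rightarrow> (real^'n \<Rightarrow> real) \<Rightarrow> bool" where
  "C2_on U f \<longleftrightarrow>
     continuous_on U f \<and>
     (\<forall>i. \<forall>x\<in>U. (\<lambda>t. f (x + t *\<^sub>R axis i 1)) differentiable (at 0)) \<and>
     (\<forall>i. continuous_on U (pd i f)) \<and>
     (\<forall>i j. \<forall>x\<in>U. (\<lambda>t. pd i f (x + t *\<^sub>R axis j 1)) differentiable (at 0)) \<and>
     (\<forall>i j. continuous_on U (pd j (pd i f)))"

definition laplacian :: "(real^'n::finite \<Rightarrow> real) \<Rightarrow> real^'n \<Rightarrow> real" where
  "laplacian f x = (\<Sum>i\<in>UNIV. pd i (pd i f) x)"

end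

theory Submission
  imports Defs
begin

text \<open>Comparison principle: if \<phi> is strictly subharmonic, has negative radial derivative on the
  spherical boundary and lies below w on the rest of the boundary of a region, then \<phi> \<le> w there,
  because at a negative minimum of w - \<phi> the second derivatives (inside) or the radial derivative
  (on the sphere) would have the wrong sign. With \<phi> = \<epsilon>(e^{-x_N} - 1) this gives w \<ge> 0, hence
  w \<ge> m > 0 on a small ball around an interior point y. Outside that ball w lies above the barrier
  m x_N e^{-\<beta>|x-y|^2} for large \<beta>, which is positive in B_+ and vanishes on \<Sigma>_1 with normal
  derivative m e^{-\<beta>|x-y|^2} > 0.\<close>

section \<open>One-variable calculus\<close>

lemma DERIV_nonpos_at_min_from_left:
  fixes g :: "real \<Rightarrow> real"
  assumes "(g has_real_derivative D) (at 0)" and "\<delta> > 0"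
    and "\<And>t. -\<delta> < t \<Longrightarrow> t \<le> 0 \<Longrightarrow> g 0 \<le> g t"
  shows "D \<le> 0"
proof (rule ccontr)
  assume "\<not> D \<le> 0"
  then obtain d where "d > 0" and "\<forall>h>0. h < d \<longrightarrow> g (0 - h) < g 0"
    using DERIV_pos_inc_left[OF assms(1)] by force
  define h where "h = min d \<delta> / 2"
  have "0 < h" "h < d" "h < \<delta>"
    using \<open>d > 0\<close> \<open>\<delta> > 0\<close> by (auto simp: h_def)
  hence "g (0 - h) < g 0" "g 0 \<le> g (- h)"
    using \<open>\<forall>h>0. h < d \<longrightarrow> g (0 - h) < g 0\<close> assms(3)[of "- h"] by auto
  thus False
    by simp
qed

lemma DERIV_nonneg_at_min_from_right:
  fixes g :: "real \<Rightarrow> real"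
  assumes "(g has_real_derivative D) (at 0)" and "\<delta> > 0"
    and "\<And>t. 0 \<le> t \<Longrightarrow> t < \<delta> \<Longrightarrow> g 0 \<le> g t"
  shows "0 \<le> D"
proof (rule ccontr)
  assume "\<not> 0 \<le> D"
  then obtain d where "d > 0" "\<forall>h>0. h < d \<longrightarrow> g (0 + h) < g 0"
    using DERIV_neg_dec_right[OF assms(1)] by force
  define h where "h = min d \<delta> / 2"
  have "0 < h" "h < d" "h < \<delta>"
    using \<open>d > 0\<close> \<open>\<delta> > 0\<close> by (auto simp: h_def)
  hence "g (0 + h) < g 0" "g 0 \<le> g h"
    using \<open>\<forall>h>0. h < d \<longrightarrow> g (0 + h) < g 0\<close> assms(3)[of h] by auto
  thus False
    by simp
qed

lemma DERIV_eq_0_if_zero_on_left: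
  fixes g :: "real \<Rightarrow> real"
  assumes "(g has_real_derivative D) (at 0)" and "\<delta> > 0"
    and "\<And>t. -\<delta> < t \<Longrightarrow> t \<le> 0 \<Longrightarrow> g t = 0"
  shows "D = 0"
  using DERIV_nonpos_at_min_from_left[OF assms(1,2)]
    DERIV_nonpos_at_min_from_left[OF DERIV_minus[OF assms(1)] assms(2)] assms(2,3)
  by force

lemma DERIV_second_nonneg_at_local_min:
  fixes g g' :: "real \<Rightarrow> real"
  assumes "\<delta> > 0"
    and g: "\<And>t. \<bar>t\<bar> < \<delta> \<Longrightarrow> (g has_real_derivative g' t) (at t)"
    and g': "(g' has_real_derivative D) (at 0)"
    and min: "\<And>t. \<bar>t\<bar> < \<delta> \<Longrightarrow> g 0 \<le> g t"
  shows "0 \<le> D"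
proof (rule ccontr)
  assume "\<not> 0 \<le> D"
  have "g' 0 = 0"
    by (rule DERIV_local_min[OF g[of 0] \<open>\<delta> > 0\<close>]) (use \<open>\<delta> > 0\<close> min in auto)
  obtain d where d: "d > 0" "\<forall>h>0. h < d \<longrightarrow> g' (0 + h) < g' 0"
    using DERIV_neg_dec_right[OF g'] \<open>\<not> 0 \<le> D\<close> by force
  define t where "t = min d \<delta> / 2"
  have t: "0 < t" "t < d" "t < \<delta>"
    using d \<open>\<delta> > 0\<close> by (auto simp: t_def)
  then obtain z where z: "0 < z" "z < t" "g t - g 0 = (t - 0) * g' z"
    using MVT2[of 0 t g g'] g by force
  have "g' z < 0"
    using d z t \<open>g' 0 = 0\<close> by force
  hence "g t < g 0"
    using z t mult_pos_neg[of t "g' z"] by simp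
  thus False
    using min[of t] t by simp
qed

lemma MVT_linear_error_bound:
  fixes g g' :: "real \<Rightarrow> real"
  assumes g: "\<And>t. \<bar>t\<bar> \<le> \<bar>b\<bar> \<Longrightarrow> (g has_real_derivative g' t) (at t)"
    and close: "\<And>t. \<bar>t\<bar> \<le> \<bar>b\<bar> \<Longrightarrow> \<bar>g' t - c\<bar> \<le> E"
  shows "\<bar>g b - g 0 - c * b\<bar> \<le> E * \<bar>b\<bar>"
proof -
  obtain z where z: "\<bar>z\<bar> \<le> \<bar>b\<bar>" "g b - g 0 = b * g' z"
  proof (cases b "0::real" rule: linorder_cases)
    case less
    then obtain z where "b < z" "z < 0" "g 0 - g b = (0 - b) * g' z"
      using MVT2[of b 0 g g'] g by force
    with that[of z] show ?thesis by (simp add: algebra_simps)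
  next
    case equal
    with that show ?thesis by simp
  next
    case greater
    then obtain z where "0 < z" "z < b" "g b - g 0 = (b - 0) * g' z"
      using MVT2[of 0 b g g'] g by force
    with that[of z] show ?thesis by simp
  qed
  hence "\<bar>g b - g 0 - c * b\<bar> = \<bar>b\<bar> * \<bar>g' z - c\<bar>"
    by (simp add: abs_mult[symmetric] algebra_simps)
  also have "\<dots> \<le> \<bar>b\<bar> * E"
    using close[OF z(1)] by (intro mult_left_mono) auto
  finally show ?thesis by (simp add: mult.commute)
qed

lemma linear_gaussian_DERIV:
  fixes A c Q a b \<beta> t :: real
  shows "((\<lambda>s. (A + s * c) * exp (- \<beta> * (Q + 2 * a * s + b * s\<^sup>2))) has_real_derivative
           exp (- \<beta> * (Q + 2 * a * t + b * t\<^sup>2)) * (c - \<beta> * (A + t * c) * (2 * a + 2 * b * t))) (at t)"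
  by (auto intro!: derivative_eq_intros simp: algebra_simps power2_eq_square)

lemma linear_gaussian_second_DERIV:
  fixes A c Q a b \<beta> :: real
  shows "((\<lambda>t. exp (- \<beta> * (Q + 2 * a * t + b * t\<^sup>2)) * (c - \<beta> * (A + t * c) * (2 * a + 2 * b * t)))
           has_real_derivative exp (- \<beta> * Q) * (4 * \<beta>\<^sup>2 * A * a\<^sup>2 - 4 * \<beta> * a * c - 2 * \<beta> * A * b)) (at 0)"
  by (auto intro!: derivative_eq_intros simp: algebra_simps power2_eq_square)

lemma exists_large_factor:
  fixes a b c :: real
  assumes "0 < a" and "0 < b"
  obtains \<beta> where "0 < \<beta>" "c \<le> \<beta> * a" "1 \<le> \<beta> * b"
proof
  define \<beta> where "\<beta> = \<bar>c\<bar> / a + 1 / b"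
  show "0 < \<beta>"
    using assms by (simp add: \<beta>_def add_nonneg_pos)
  have "c \<le> \<bar>c\<bar> / a * a"
    using assms by simp
  also have "\<dots> \<le> \<beta> * a"
    using assms by (intro mult_right_mono) (auto simp: \<beta>_def)
  finally show "c \<le> \<beta> * a" .
  have "1 = 1 / b * b"
    using assms by simp
  also have "\<dots> \<le> \<beta> * b"
    using assms by (intro mult_right_mono) (auto simp: \<beta>_def)
  finally show "1 \<le> \<beta> * b" .
qed

section \<open>Differentiability of C2 functions\<close>

lemma C2_on_axis_slice_DERIV:
  assumes "C2_on U w" and "x + t *\<^sub>R axis i 1 \<in> U"
  shows "((\<lambda>s. w (x + s *\<^sub>R axis i 1)) has_real_derivative pd i w (x + t *\<^sub>R axis i 1)) (at t)"
proof -
  let ?y = "x + t *\<^sub>R axis i 1"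
  have "((\<lambda>s. w (?y + s *\<^sub>R axis i 1)) has_real_derivative pd i w ?y) (at 0)"
    using assms unfolding C2_on_def pd_def dir_deriv_def
    by (simp add: DERIV_deriv_iff_real_differentiable)
  moreover have "(\<lambda>s. w (?y + s *\<^sub>R axis i 1)) = (\<lambda>s. w (x + (s + t) *\<^sub>R axis i 1))"
    by (simp add: algebra_simps scaleR_add_left)
  ultimately show ?thesis
    using DERIV_shift[of "\<lambda>s. w (x + s *\<^sub>R axis i 1)" "pd i w ?y" 0 t] by simp
qed

lemma C2_on_second_axis_slice_DERIV:
  assumes "C2_on U w" and "x \<in> U"
  shows "((\<lambda>t. pd i w (x + t *\<^sub>R axis i 1)) has_real_derivative pd i (pd i w) x) (at 0)"
proof -
  have "(\<lambda>t. pd i w (x + t *\<^sub>R axis i 1)) differentiable (at 0)"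
    using assms unfolding C2_on_def by blast
  thus ?thesis
    unfolding pd_def[of i "pd i w"] dir_deriv_def
    by (simp add: DERIV_deriv_iff_real_differentiable)
qed

lemma norm_partial_axis_sum_le:
  fixes h :: "real^'n::finite"
  assumes "j \<notin> S" and "\<bar>t\<bar> \<le> \<bar>h $ j\<bar>"
  shows "norm ((\<Sum>i\<in>S. h $ i *\<^sub>R axis i (1::real)) + t *\<^sub>R axis j (1::real)) \<le> norm h"
proof (rule norm_le_componentwise_cart)
  fix l
  have eq: "((\<Sum>i\<in>S. h $ i *\<^sub>R axis i (1::real)) + t *\<^sub>R axis j (1::real)) $ l
      = (if l \<in> S then h $ l else 0) + (if l = j then t else 0)"
    by (simp add: sum_component axis_def if_distrib sum.delta' cong: if_cong)
  show "norm (((\<Sum>i\<in>S. h $ i *\<^sub>R axis i (1::real)) + t *\<^sub>R axis j (1::real)) $ l) \<le> norm (h $ l)"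
    unfolding eq using assms by auto
qed

text \<open>Moving from x to x + h one coordinate at a time, the mean value theorem on each
  segment bounds the error of the linear approximation given by the partial derivatives.\<close>
lemma partials_linear_approx_error:
  fixes w :: "real^'n::finite \<Rightarrow> real"
  assumes "C2_on U w" and "finite S" and "norm h < d"
    and near: "\<And>z i. norm (z - x) < d \<Longrightarrow> z \<in> U \<and> \<bar>pd i w z - pd i w x\<bar> \<le> e"
  shows "\<bar>w (x + (\<Sum>i\<in>S. h $ i *\<^sub>R axis i 1)) - w x - (\<Sum>i\<in>S. pd i w x * h $ i)\<bar>
           \<le> e * (\<Sum>i\<in>S. \<bar>h $ i\<bar>)"
  using \<open>finite S\<close>
proof (induction S rule: finite_induct)
  case empty
  thus ?case by simp
next
  case (insert j S)
  define z where "z = x + (\<Sum>i\<in>S. h $ i *\<^sub>R axis i 1)"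
  have z_near: "norm (z + t *\<^sub>R axis j 1 - x) < d" if "\<bar>t\<bar> \<le> \<bar>h $ j\<bar>" for t
    using le_less_trans[OF norm_partial_axis_sum_le[OF insert.hyps(2) that] \<open>norm h < d\<close>]
    by (simp add: z_def)
  have "\<bar>w (z + h $ j *\<^sub>R axis j 1) - w (z + 0 *\<^sub>R axis j 1) - pd j w x * h $ j\<bar> \<le> e * \<bar>h $ j\<bar>"
    by (rule MVT_linear_error_bound[where g = "\<lambda>t. w (z + t *\<^sub>R axis j 1)"
          and g' = "\<lambda>t. pd j w (z + t *\<^sub>R axis j 1)"];
        use near[OF z_near] C2_on_axis_slice_DERIV[OF \<open>C2_on U w\<close>] in blast)
  moreover have "w (x + (\<Sum>i\<in>insert j S. h $ i *\<^sub>R axis i 1)) = w (z + h $ j *\<^sub>R axis j 1)"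
    using insert.hyps by (simp add: z_def algebra_simps)
  ultimately show ?case
    using insert.IH insert.hyps by (simp add: z_def distrib_left)
qed

lemma C2_on_has_derivative:
  fixes w :: "real^'n::finite \<Rightarrow> real"
  assumes C2: "C2_on U w" and "open U" and "x \<in> U"
  shows "(w has_derivative (\<lambda>h. \<Sum>i\<in>UNIV. pd i w x * h $ i)) (at x)"
  unfolding has_derivative_at_alt
proof (intro conjI allI impI)
  have "(\<lambda>h. \<Sum>i\<in>UNIV. pd i w x * h $ i) = (\<lambda>h. (\<chi> i. pd i w x) \<bullet> h)"
    by (simp add: inner_vec_def)
  thus "bounded_linear (\<lambda>h. \<Sum>i\<in>UNIV. pd i w x * h $ i)"
    using bounded_linear_inner_right by simp
next
  fix e :: real
  assume "e > 0"
  define e' where "e' = e / real CARD('n)"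
  have "e' > 0"
    using \<open>e > 0\<close> by (simp add: e'_def)
  have "isCont (pd i w) x" for i
    using C2 \<open>open U\<close> \<open>x \<in> U\<close> unfolding C2_on_def by (meson continuous_on_eq_continuous_at)
  hence "\<forall>\<^sub>F z in at x. \<forall>i. dist (pd i w z) (pd i w x) < e'"
    using \<open>e' > 0\<close> by (intro eventually_all_finite) (simp add: isCont_def tendsto_iff)
  moreover have "\<forall>\<^sub>F z in at x. z \<in> U"
    using \<open>open U\<close> \<open>x \<in> U\<close> by (rule eventually_at_in_open')
  ultimately have "\<forall>\<^sub>F z in at x. z \<in> U \<and> (\<forall>i. dist (pd i w z) (pd i w x) < e')"
    by (simp add: eventually_conj_iff)
  then obtain d where "d > 0"
    and d: "\<And>z. z \<noteq> x \<Longrightarrow> dist z x < d \<Longrightarrow> z \<in> U \<and> (\<forall>i. dist (pd i w z) (pd i w x) < e')"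
    unfolding eventually_at by blast
  have near: "z \<in> U \<and> \<bar>pd i w z - pd i w x\<bar> \<le> e'" if "norm (z - x) < d" for z i
    using d[of z] that \<open>x \<in> U\<close> \<open>e' > 0\<close>
    by (cases "z = x") (auto simp: dist_norm dist_real_def less_imp_le)
  show "\<exists>d>0. \<forall>y. norm (y - x) < d \<longrightarrow>
          norm (w y - w x - (\<Sum>i\<in>UNIV. pd i w x * (y - x) $ i)) \<le> e * norm (y - x)"
  proof (intro exI[of _ d] conjI allI impI \<open>d > 0\<close>)
    fix y
    assume "norm (y - x) < d"
    have "(\<Sum>i\<in>UNIV. (y - x) $ i *\<^sub>R axis i 1) = y - x"
      using basis_expansion[of "y - x"] by (simp add: scalar_mult_eq_scaleR)
    hence "\<bar>w y - w x - (\<Sum>i\<in>UNIV. pd i w x * (y - x) $ i)\<bar> \<le> e' * (\<Sum>i\<in>UNIV. \<bar>(y - x) $ i\<bar>)"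
      using partials_linear_approx_error[OF C2 finite_class.finite_UNIV \<open>norm (y - x) < d\<close> near] by simp
    also have "\<dots> \<le> e' * (\<Sum>i\<in>(UNIV::'n set). norm (y - x))"
      using \<open>e' > 0\<close> by (intro mult_left_mono sum_mono component_le_norm_cart) auto
    also have "\<dots> = e * norm (y - x)"
      by (simp add: e'_def)
    finally show "norm (w y - w x - (\<Sum>i\<in>UNIV. pd i w x * (y - x) $ i)) \<le> e * norm (y - x)"
      by simp
  qed
qed

lemma C2_on_line_DERIV:
  fixes w :: "real^'n::finite \<Rightarrow> real"
  assumes "C2_on U w" and "open U" and "x \<in> U"
  shows "((\<lambda>t. w (x + t *\<^sub>R v)) has_real_derivative (\<Sum>i\<in>UNIV. pd i w x * v $ i)) (at 0)"
proof -
  have "((\<lambda>t. x + t *\<^sub>R v) has_derivative (\<lambda>t. t *\<^sub>R v)) (at 0)"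
    by (auto intro!: derivative_eq_intros)
  hence "((\<lambda>t. w (x + t *\<^sub>R v)) has_derivative (\<lambda>t. \<Sum>i\<in>UNIV. pd i w x * (t *\<^sub>R v) $ i)) (at 0)"
    using has_derivative_compose C2_on_has_derivative[OF assms] by fastforce
  moreover have "(\<lambda>t. \<Sum>i\<in>UNIV. pd i w x * (t *\<^sub>R v) $ i) = (*) (\<Sum>i\<in>UNIV. pd i w x * v $ i)"
    by (rule ext) (simp add: sum_distrib_left algebra_simps)
  ultimately show ?thesis
    unfolding has_field_derivative_def by simp
qed

lemma radial_DERIV_of_outward_normal:
  fixes w :: "real^'n::finite \<Rightarrow> real"
  assumes "C2_on U w" and "open U" and "x \<in> U" and "norm x = 1"
    and "dir_deriv w (outward_normal x) x = 0"
  shows "((\<lambda>t. w (x + t *\<^sub>R x)) has_real_derivative 0) (at 0)"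
proof -
  have D: "((\<lambda>t. w (x + t *\<^sub>R x)) has_real_derivative (\<Sum>i\<in>UNIV. pd i w x * x $ i)) (at 0)"
    by (rule C2_on_line_DERIV[OF assms(1-3)])
  have "deriv (\<lambda>t. w (x + t *\<^sub>R x)) 0 = 0"
    using assms(4,5) by (simp add: dir_deriv_def outward_normal_def)
  thus ?thesis
    using DERIV_imp_deriv[OF D] D by simp
qed

section \<open>The half ball\<close>

lemma Bplus_eq_cball_Int: "Bplus k = cball 0 1 \<inter> {x. x $ k > 0}"
  by (auto simp: Bplus_def)

lemma closure_Bplus:
  fixes k :: "'n::finite"
  shows "closure (Bplus k) = {x. norm x \<le> 1 \<and> 0 \<le> x $ k}"
proof -
  have "(1/2) *\<^sub>R axis k 1 \<in> rel_interior (cball (0::real^'n) 1) \<inter> rel_interior {x. x $ k > 0}"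
    by (simp add: rel_interior_open open_halfspace_component_gt_cart rel_interior_nonempty_interior)
  hence "closure (Bplus k) = closure (cball 0 1) \<inter> closure {x. x $ k > (0::real)}"
    unfolding Bplus_eq_cball_Int
    using convex_halfspace_gt[of 0 "axis k (1::real)"]
    by (intro closure_Int_convex) (auto simp: inner_axis')
  thus ?thesis
    by auto
qed

lemma interior_Bplus:
  fixes k :: "'n::finite"
  shows "interior (Bplus k) = {x. norm x < 1 \<and> 0 < x $ k}"
  by (auto simp: Bplus_eq_cball_Int interior_open[OF open_halfspace_component_gt_cart])

lemma Sigma1_eq: "Sigma1 k = {x. norm x \<le> 1 \<and> x $ k = 0}"
  by (auto simp: Sigma1_def frontier_def closure_Bplus interior_Bplus)

lemma Sigma2_eq: "Sigma2 k = {x. norm x = 1 \<and> 0 < x $ k}"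
  by (auto simp: Sigma2_def frontier_def closure_Bplus interior_Bplus)

lemma segment_towards_pole:
  fixes p y :: "real^'n::finite"
  assumes "norm p \<le> 1" and "p $ k = 0" and "0 \<le> t" and "t \<le> 1" and "2 * t < y $ k - r"
  shows "norm (p + t *\<^sub>R (axis k 1 - p)) \<le> 1" and "r \<le> dist y (p + t *\<^sub>R (axis k 1 - p))"
proof -
  have "p + t *\<^sub>R (axis k 1 - p) = (1 - t) *\<^sub>R p + t *\<^sub>R axis k 1"
    by (simp add: algebra_simps)
  thus "norm (p + t *\<^sub>R (axis k 1 - p)) \<le> 1"
    using convexD[OF convex_cball, of p 0 1 "axis k 1" "1 - t" t] assms(1,3,4) by simp
  have "y $ k \<le> dist y p"
    using component_le_norm_cart[of "y - p" k] assms(2) by (simp add: dist_norm)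
  moreover have "norm (axis k 1 - p) \<le> 2"
    using norm_triangle_ineq4[of "axis k (1::real)" p] assms(1) by simp
  hence "norm (t *\<^sub>R (axis k 1 - p)) \<le> 2 * t"
    using assms(3) mult_left_mono[of "norm (axis k 1 - p)" 2 t] by simp
  ultimately show "r \<le> dist y (p + t *\<^sub>R (axis k 1 - p))"
    using dist_triangle[of y p "p + t *\<^sub>R (axis k 1 - p)"] assms(5) by (simp add: dist_norm)
qed

section \<open>Comparison functions\<close>

text \<open>\<Delta>\<phi>(x) > 0, with the second derivatives taken along the coordinate lines through x only, so
  that explicit comparison functions need not be shown to satisfy \<open>C2_on\<close>.\<close>
definition strictly_subharmonic_at :: "(real^'n::finite \<Rightarrow> real) \<Rightarrow> real^'n \<Rightarrow> bool" where
  "strictly_subharmonic_at \<phi> x \<longleftrightarrow>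
     (\<exists>\<phi>1 \<phi>2. (\<forall>i t. ((\<lambda>s. \<phi> (x + s *\<^sub>R axis i 1)) has_real_derivative \<phi>1 i t) (at t)) \<and>
              (\<forall>i. (\<phi>1 i has_real_derivative \<phi>2 i) (at 0)) \<and> 0 < (\<Sum>i\<in>UNIV. \<phi>2 i))"

lemma strictly_subharmonic_at_cmult:
  assumes "0 < m" and "strictly_subharmonic_at \<phi> x"
  shows "strictly_subharmonic_at (\<lambda>y. m * \<phi> y) x"
proof -
  obtain \<phi>1 \<phi>2 where
    "\<And>i t. ((\<lambda>s. \<phi> (x + s *\<^sub>R axis i 1)) has_real_derivative \<phi>1 i t) (at t)"
    "\<And>i. (\<phi>1 i has_real_derivative \<phi>2 i) (at 0)" "0 < (\<Sum>i\<in>UNIV. \<phi>2 i)"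
    using assms(2) unfolding strictly_subharmonic_at_def by blast
  thus ?thesis
    unfolding strictly_subharmonic_at_def
    by (intro exI[of _ "\<lambda>i t. m * \<phi>1 i t"] exI[of _ "\<lambda>i. m * \<phi>2 i"])
      (simp add: DERIV_cmult \<open>0 < m\<close> sum_distrib_left[symmetric])
qed

lemma laplacian_ge_at_local_min_of_difference:
  fixes w \<phi> :: "real^'n::finite \<Rightarrow> real"
  assumes C2: "C2_on U w" and "\<epsilon> > 0"
    and near: "\<And>v. norm v < \<epsilon> \<Longrightarrow> x + v \<in> U \<and> w x - \<phi> x \<le> w (x + v) - \<phi> (x + v)"
    and \<phi>1: "\<And>i t. ((\<lambda>s. \<phi> (x + s *\<^sub>R axis i 1)) has_real_derivative \<phi>1 i t) (at t)"
    and \<phi>2: "\<And>i. (\<phi>1 i has_real_derivative \<phi>2 i) (at 0)"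
  shows "(\<Sum>i\<in>UNIV. \<phi>2 i) \<le> laplacian w x"
proof -
  have "0 \<le> pd i (pd i w) x - \<phi>2 i" for i
  proof (rule DERIV_second_nonneg_at_local_min[OF \<open>\<epsilon> > 0\<close>,
        where g = "\<lambda>t. w (x + t *\<^sub>R axis i 1) - \<phi> (x + t *\<^sub>R axis i 1)"
          and g' = "\<lambda>t. pd i w (x + t *\<^sub>R axis i 1) - \<phi>1 i t"])
    fix t :: real
    assume "\<bar>t\<bar> < \<epsilon>"
    hence t: "x + t *\<^sub>R axis i 1 \<in> U \<and> w x - \<phi> x \<le> w (x + t *\<^sub>R axis i 1) - \<phi> (x + t *\<^sub>R axis i 1)"
      using near[of "t *\<^sub>R axis i 1"] by simp
    thus "((\<lambda>t. w (x + t *\<^sub>R axis i 1) - \<phi> (x + t *\<^sub>R axis i 1)) has_real_derivative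
            pd i w (x + t *\<^sub>R axis i 1) - \<phi>1 i t) (at t)"
      by (intro DERIV_diff C2_on_axis_slice_DERIV[OF C2] \<phi>1) blast
    show "w (x + 0 *\<^sub>R axis i 1) - \<phi> (x + 0 *\<^sub>R axis i 1)
            \<le> w (x + t *\<^sub>R axis i 1) - \<phi> (x + t *\<^sub>R axis i 1)"
      using t by simp
  next
    have "x \<in> U"
      using near[of 0] \<open>\<epsilon> > 0\<close> by simp
    thus "((\<lambda>t. pd i w (x + t *\<^sub>R axis i 1) - \<phi>1 i t) has_real_derivative
            pd i (pd i w) x - \<phi>2 i) (at 0)"
      by (intro DERIV_diff C2_on_second_axis_slice_DERIV[OF C2] \<phi>2)
  qed
  thus ?thesis
    unfolding laplacian_def by (intro sum_mono) simp
qed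

lemma exp_barrier_strictly_subharmonic:
  assumes "0 < \<epsilon>"
  shows "strictly_subharmonic_at (\<lambda>x. \<epsilon> * (exp (- x $ k) - 1)) z"
  unfolding strictly_subharmonic_at_def
proof (intro exI conjI allI)
  fix i t
  show "((\<lambda>s. \<epsilon> * (exp (- (z + s *\<^sub>R axis i 1) $ k) - 1)) has_real_derivative
          - \<epsilon> * axis i 1 $ k * exp (- (z $ k + t * axis i 1 $ k))) (at t)"
    by (auto intro!: derivative_eq_intros simp: algebra_simps)
next
  fix i
  show "((\<lambda>t. - \<epsilon> * axis i 1 $ k * exp (- (z $ k + t * axis i 1 $ k))) has_real_derivative
          \<epsilon> * exp (- z $ k) * axis i (1::real) $ k) (at 0)"
    by (auto intro!: derivative_eq_intros simp: axis_def)
next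
  show "0 < (\<Sum>i\<in>UNIV. \<epsilon> * exp (- z $ k) * axis i (1::real) $ k)"
    using assms by (simp add: axis_def if_distrib sum.delta' cong: if_cong)
qed

text \<open>The Hopf barrier, multiplied by the coordinate x_k so that it vanishes on the flat
  boundary.\<close>
definition hopf_barrier :: "'n::finite \<Rightarrow> real \<Rightarrow> real^'n \<Rightarrow> real^'n \<Rightarrow> real" where
  "hopf_barrier k \<beta> y x = x $ k * exp (- \<beta> * (norm (x - y))\<^sup>2)"

lemma hopf_barrier_le_1:
  assumes "0 \<le> \<beta>" and "norm x \<le> 1" and "0 \<le> x $ k"
  shows "hopf_barrier k \<beta> y x \<le> 1"
  unfolding hopf_barrier_def
  using assms component_le_norm_cart[of x k] by (intro mult_le_one) auto

lemma hopf_barrier_line: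
  "hopf_barrier k \<beta> y (x + t *\<^sub>R v) =
     (x $ k + t * v $ k) *
     exp (- \<beta> * ((norm (x - y))\<^sup>2 + 2 * ((x - y) \<bullet> v) * t + (norm v)\<^sup>2 * t\<^sup>2))"
proof -
  have "(norm (x + t *\<^sub>R v - y))\<^sup>2 = (norm ((x - y) + t *\<^sub>R v))\<^sup>2"
    by (simp add: algebra_simps)
  also have "\<dots> = (norm (x - y))\<^sup>2 + 2 * ((x - y) \<bullet> v) * t + (norm v)\<^sup>2 * t\<^sup>2"
    by (simp only: power2_norm_eq_inner)
      (simp add: inner_add_left inner_add_right inner_commute algebra_simps power2_eq_square)
  finally show ?thesis
    by (simp add: hopf_barrier_def)
qed

lemma hopf_barrier_line_DERIV:
  "((\<lambda>t. hopf_barrier k \<beta> y (x + t *\<^sub>R v)) has_real_derivative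
      exp (- \<beta> * (norm (x - y))\<^sup>2) * (v $ k - 2 * \<beta> * x $ k * ((x - y) \<bullet> v))) (at 0)"
  unfolding hopf_barrier_line
  using linear_gaussian_DERIV[of "x $ k" "v $ k" \<beta> "(norm (x - y))\<^sup>2" "(x - y) \<bullet> v" "(norm v)\<^sup>2" 0]
  by (simp add: algebra_simps)

text \<open>The Laplacian of the barrier is 2\<beta> e^{-\<beta>|x-y|^2} (x_k (2\<beta>|x-y|^2 - N - 2) + 2 y_k).\<close>
lemma hopf_barrier_strictly_subharmonic:
  fixes y z :: "real^'n::finite"
  assumes "0 < \<beta>" and "0 \<le> z $ k" and "0 < y $ k"
    and "real CARD('n) + 2 \<le> 2 * \<beta> * (norm (z - y))\<^sup>2"
  shows "strictly_subharmonic_at (hopf_barrier k \<beta> y) z"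
proof -
  define Q where "Q = (norm (z - y))\<^sup>2"
  define a where "a i = (z - y) $ i" for i
  define c where "c i = axis i (1::real) $ k" for i
  have slice: "hopf_barrier k \<beta> y (z + s *\<^sub>R axis i 1)
                 = (z $ k + s * c i) * exp (- \<beta> * (Q + 2 * a i * s + 1 * s\<^sup>2))" for i s
    unfolding hopf_barrier_line by (simp add: Q_def a_def c_def inner_axis)
  define \<phi>1 where "\<phi>1 i t = exp (- \<beta> * (Q + 2 * a i * t + 1 * t\<^sup>2)) *
                                (c i - \<beta> * (z $ k + t * c i) * (2 * a i + 2 * 1 * t))" for i t
  define \<phi>2 where "\<phi>2 i = exp (- \<beta> * Q) *
                             (4 * \<beta>\<^sup>2 * z $ k * (a i)\<^sup>2 - 4 * \<beta> * a i * c i - 2 * \<beta> * z $ k * 1)" for i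
  have "((\<lambda>s. hopf_barrier k \<beta> y (z + s *\<^sub>R axis i 1)) has_real_derivative \<phi>1 i t) (at t)" for i t
    unfolding slice \<phi>1_def by (rule linear_gaussian_DERIV)
  moreover have "(\<phi>1 i has_real_derivative \<phi>2 i) (at 0)" for i
    unfolding \<phi>1_def \<phi>2_def by (rule linear_gaussian_second_DERIV)
  moreover have "(\<Sum>i\<in>UNIV. \<phi>2 i)
      = exp (- \<beta> * Q) * (4 * \<beta>\<^sup>2 * z $ k * (\<Sum>i\<in>UNIV. (a i)\<^sup>2) - 4 * \<beta> * (\<Sum>i\<in>UNIV. a i * c i)
          - 2 * \<beta> * z $ k * real CARD('n))"
    by (simp add: \<phi>2_def sum_distrib_left sum_subtractf sum.distrib algebra_simps)
  moreover have "\<dots> = exp (- \<beta> * Q) * (2 * \<beta>) * (z $ k * (2 * \<beta> * Q - 2 - real CARD('n)) + 2 * y $ k)"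
  proof -
    have sum_a: "(\<Sum>i\<in>UNIV. (a i)\<^sup>2) = Q"
      unfolding Q_def a_def power2_norm_eq_inner by (simp add: inner_vec_def power2_eq_square)
    have sum_ac: "(\<Sum>i\<in>UNIV. a i * c i) = z $ k - y $ k"
      by (simp add: a_def c_def axis_def if_distrib sum.delta' cong: if_cong)
    show ?thesis
      unfolding sum_a sum_ac by (simp add: algebra_simps power2_eq_square)
  qed
  moreover have "\<dots> > 0"
    using assms by (intro mult_pos_pos add_nonneg_pos mult_nonneg_nonneg) (auto simp: Q_def)
  ultimately show ?thesis
    unfolding strictly_subharmonic_at_def by metis
qed

lemma hopf_barrier_radial_DERIV_neg:
  fixes y z :: "real^'n::finite"
  assumes "norm z = 1" and "0 < z $ k" and "0 < \<beta>" and "1 \<le> \<beta> * (1 - norm y)"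
  obtains d where "d < 0" "((\<lambda>t. hopf_barrier k \<beta> y (z + t *\<^sub>R z)) has_real_derivative d) (at 0)"
proof
  have "1 - norm y \<le> (z - y) \<bullet> z"
    using norm_cauchy_schwarz[of y z] assms(1)
    by (simp add: inner_diff_left power2_norm_eq_inner[symmetric])
  hence "1 \<le> \<beta> * ((z - y) \<bullet> z)"
    using assms(3,4) mult_left_mono[of "1 - norm y" "(z - y) \<bullet> z" \<beta>] by linarith
  moreover have "z $ k - 2 * \<beta> * z $ k * ((z - y) \<bullet> z) = z $ k * (1 - 2 * (\<beta> * ((z - y) \<bullet> z)))"
    by (simp add: algebra_simps)
  ultimately have "z $ k - 2 * \<beta> * z $ k * ((z - y) \<bullet> z) < 0"
    using \<open>0 < z $ k\<close> by (simp add: mult_pos_neg)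
  thus "exp (- \<beta> * (norm (z - y))\<^sup>2) * (z $ k - 2 * \<beta> * z $ k * ((z - y) \<bullet> z)) < 0"
    by (simp add: mult_pos_neg)
qed (rule hopf_barrier_line_DERIV)

section \<open>Supersolutions on the half ball\<close>

locale half_ball_supersolution =
  fixes U :: "(real^'n::finite) set" and w :: "real^'n \<Rightarrow> real" and k :: 'n
  assumes open_U: "open U"
    and half_ball_subset: "{x. norm x \<le> 1 \<and> 0 \<le> x $ k} \<subseteq> U"
    and C2: "C2_on U w"
    and superharmonic: "\<And>x. norm x < 1 \<Longrightarrow> 0 < x $ k \<Longrightarrow> laplacian w x \<le> 0"
    and zero_on_flat: "\<And>x. norm x \<le> 1 \<Longrightarrow> x $ k = 0 \<Longrightarrow> w x = 0"
    and radial_neumann: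
      "\<And>x. norm x = 1 \<Longrightarrow> 0 < x $ k \<Longrightarrow> ((\<lambda>t. w (x + t *\<^sub>R x)) has_real_derivative 0) (at 0)"
begin

lemma no_interior_min_of_difference:
  assumes "norm x0 < 1" and "0 < x0 $ k" and "0 < \<epsilon>" and "ball x0 \<epsilon> \<subseteq> S"
    and "strictly_subharmonic_at \<phi> x0"
    and min: "\<And>y. norm y \<le> 1 \<Longrightarrow> 0 \<le> y $ k \<Longrightarrow> y \<in> S \<Longrightarrow> w x0 - \<phi> x0 \<le> w y - \<phi> y"
  shows False
proof -
  define \<delta> where "\<delta> = min \<epsilon> (min (1 - norm x0) (x0 $ k))"
  have "0 < \<delta>"
    using assms(1-3) by (simp add: \<delta>_def)
  have near: "x0 + v \<in> U \<and> w x0 - \<phi> x0 \<le> w (x0 + v) - \<phi> (x0 + v)" if "norm v < \<delta>" for v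
  proof -
    have "norm (x0 + v) \<le> 1"
      using norm_triangle_ineq[of x0 v] that by (simp add: \<delta>_def)
    moreover have "0 \<le> (x0 + v) $ k"
      using component_le_norm_cart[of v k] that by (simp add: \<delta>_def abs_le_iff)
    moreover have "x0 + v \<in> S"
      using \<open>ball x0 \<epsilon> \<subseteq> S\<close> that by (auto simp: dist_norm \<delta>_def)
    ultimately show ?thesis
      using min half_ball_subset by auto
  qed
  obtain \<phi>1 \<phi>2 where
    "\<And>i t. ((\<lambda>s. \<phi> (x0 + s *\<^sub>R axis i 1)) has_real_derivative \<phi>1 i t) (at t)"
    "\<And>i. (\<phi>1 i has_real_derivative \<phi>2 i) (at 0)" and "0 < (\<Sum>i\<in>UNIV. \<phi>2 i)"
    using assms(5) unfolding strictly_subharmonic_at_def by blast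
  hence "0 < laplacian w x0"
    using laplacian_ge_at_local_min_of_difference[OF C2 \<open>0 < \<delta>\<close> near] by fastforce
  thus False
    using superharmonic[OF assms(1,2)] by simp
qed

lemma no_spherical_min_of_difference:
  assumes "norm x0 = 1" and "0 < x0 $ k" and "0 < \<epsilon>" and "ball x0 \<epsilon> \<subseteq> S"
    and "d < 0" and d: "((\<lambda>t. \<phi> (x0 + t *\<^sub>R x0)) has_real_derivative d) (at 0)"
    and min: "\<And>y. norm y \<le> 1 \<Longrightarrow> 0 \<le> y $ k \<Longrightarrow> y \<in> S \<Longrightarrow> w x0 - \<phi> x0 \<le> w y - \<phi> y"
  shows False
proof -
  have "w x0 - \<phi> x0 \<le> w (x0 + t *\<^sub>R x0) - \<phi> (x0 + t *\<^sub>R x0)" if "- min \<epsilon> 1 < t" "t \<le> 0" for t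
  proof (rule min)
    have "x0 + t *\<^sub>R x0 = (1 + t) *\<^sub>R x0"
      by (simp add: algebra_simps)
    thus "norm (x0 + t *\<^sub>R x0) \<le> 1" "0 \<le> (x0 + t *\<^sub>R x0) $ k"
      using that assms(1,2) by auto
    show "x0 + t *\<^sub>R x0 \<in> S"
      using that assms(1,4) by (auto simp: dist_norm)
  qed
  hence "0 - d \<le> 0"
    using \<open>0 < \<epsilon>\<close>
    by (intro DERIV_nonpos_at_min_from_left[OF DERIV_diff[OF radial_neumann[OF assms(1,2)] d],
          of "min \<epsilon> 1"]) auto
  thus False
    using \<open>d < 0\<close> by simp
qed

text \<open>w - \<phi> attains its minimum on the compact part of the closed half ball lying in S; the two
  lemmas above rule out a negative minimum at every point not covered by \<open>boundary\<close>.\<close>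
lemma comparison:
  fixes \<phi> :: "real^'n \<Rightarrow> real"
  assumes "closed S" and "continuous_on UNIV \<phi>"
    and boundary: "\<And>x. norm x \<le> 1 \<Longrightarrow> 0 \<le> x $ k \<Longrightarrow> x \<in> S \<Longrightarrow>
                     x $ k = 0 \<or> x \<notin> interior S \<Longrightarrow> \<phi> x \<le> w x"
    and subharmonic: "\<And>x. norm x < 1 \<Longrightarrow> 0 < x $ k \<Longrightarrow> x \<in> interior S \<Longrightarrow>
                        strictly_subharmonic_at \<phi> x"
    and outflow: "\<And>x. norm x = 1 \<Longrightarrow> 0 < x $ k \<Longrightarrow> x \<in> interior S \<Longrightarrow>
                    \<exists>d<0. ((\<lambda>t. \<phi> (x + t *\<^sub>R x)) has_real_derivative d) (at 0)"
    and x: "norm x \<le> 1" "0 \<le> x $ k" "x \<in> S"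
  shows "\<phi> x \<le> w x"
proof -
  define K where "K = {x. norm x \<le> 1 \<and> 0 \<le> x $ k} \<inter> S"
  have "compact K"
    unfolding K_def compact_eq_bounded_closed
    by (intro conjI closed_Int \<open>closed S\<close> closed_Collect_conj closed_Collect_le continuous_intros
        bounded_subset[OF bounded_cball[of 0 1]]) auto
  moreover have "continuous_on K (\<lambda>x. w x - \<phi> x)"
    using C2 half_ball_subset \<open>continuous_on UNIV \<phi>\<close> unfolding C2_on_def K_def
    by (intro continuous_intros) (auto elim: continuous_on_subset)
  moreover have "x \<in> K"
    using x by (simp add: K_def)
  ultimately obtain x0 where "x0 \<in> K" and x0_min: "\<And>y. y \<in> K \<Longrightarrow> w x0 - \<phi> x0 \<le> w y - \<phi> y"
    using continuous_attains_inf[of K "\<lambda>x. w x - \<phi> x"] by blast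
  have "0 \<le> w x0 - \<phi> x0"
  proof (rule ccontr)
    assume "\<not> 0 \<le> w x0 - \<phi> x0"
    hence "0 < x0 $ k" "x0 \<in> interior S"
      using boundary \<open>x0 \<in> K\<close> unfolding K_def by force+
    then obtain \<epsilon> where "0 < \<epsilon>" "ball x0 \<epsilon> \<subseteq> S"
      by (auto simp: mem_interior)
    have min: "\<And>y. norm y \<le> 1 \<Longrightarrow> 0 \<le> y $ k \<Longrightarrow> y \<in> S \<Longrightarrow> w x0 - \<phi> x0 \<le> w y - \<phi> y"
      using x0_min by (simp add: K_def)
    consider "norm x0 < 1" | "norm x0 = 1"
      using \<open>x0 \<in> K\<close> by (force simp: K_def)
    thus False
    proof cases
      case 1
      thus False
        using no_interior_min_of_difference \<open>0 < x0 $ k\<close> \<open>0 < \<epsilon>\<close> \<open>ball x0 \<epsilon> \<subseteq> S\<close> min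
          subharmonic[OF 1 \<open>0 < x0 $ k\<close> \<open>x0 \<in> interior S\<close>] by blast
    next
      case 2
      thus False
        using no_spherical_min_of_difference \<open>0 < x0 $ k\<close> \<open>0 < \<epsilon>\<close> \<open>ball x0 \<epsilon> \<subseteq> S\<close> min
          outflow[OF 2 \<open>0 < x0 $ k\<close> \<open>x0 \<in> interior S\<close>] by blast
    qed
  qed
  thus ?thesis
    using x0_min[OF \<open>x \<in> K\<close>] by simp
qed

lemma nonneg_in_half_ball:
  assumes "norm x \<le> 1" and "0 \<le> x $ k"
  shows "0 \<le> w x"
proof (rule field_le_epsilon)
  fix \<epsilon> :: real
  assume "0 < \<epsilon>"
  have "\<epsilon> * (exp (- x $ k) - 1) \<le> w x"
  proof (rule comparison[of UNIV])
    show "continuous_on UNIV (\<lambda>x. \<epsilon> * (exp (- x $ k) - 1))"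
      by (intro continuous_intros)
    show "strictly_subharmonic_at (\<lambda>x. \<epsilon> * (exp (- x $ k) - 1)) z" for z
      using \<open>0 < \<epsilon>\<close> by (rule exp_barrier_strictly_subharmonic)
    show "\<exists>d<0. ((\<lambda>t. \<epsilon> * (exp (- (z + t *\<^sub>R z) $ k) - 1)) has_real_derivative d) (at 0)"
      if "0 < z $ k" for z
      using \<open>0 < \<epsilon>\<close> that
      by (intro exI[of _ "- \<epsilon> * z $ k * exp (- z $ k)"] conjI)
        (auto intro!: derivative_eq_intros simp: mult_pos_pos)
  qed (use assms zero_on_flat in auto)
  moreover have "- \<epsilon> \<le> \<epsilon> * (exp (- x $ k) - 1)"
    using \<open>0 < \<epsilon>\<close> by (simp add: algebra_simps)
  ultimately show "0 \<le> w x + \<epsilon>"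
    by linarith
qed

lemma positive_near_interior_point:
  assumes "x0 \<in> Bplus k" and "w x0 \<noteq> 0"
  obtains y r m where "norm y < 1" "0 < y $ k" "0 < r" "r < y $ k" "0 < m"
    "\<And>z. dist y z \<le> r \<Longrightarrow> m \<le> w z"
proof -
  have x0: "norm x0 \<le> 1" "0 < x0 $ k"
    using assms(1) by (auto simp: Bplus_def)
  hence "0 < w x0"
    using nonneg_in_half_ball[of x0] assms(2) by force
  have "x0 \<in> U"
    using half_ball_subset x0 by auto
  hence "isCont w x0"
    using C2 open_U unfolding C2_on_def by (simp add: continuous_on_eq_continuous_at)
  then obtain \<eta> where "0 < \<eta>" and \<eta>: "\<And>z. dist z x0 < \<eta> \<Longrightarrow> dist (w z) (w x0) < w x0 / 2"
    using \<open>0 < w x0\<close> unfolding continuous_at_eps_delta by (metis half_gt_zero)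
  \<comment> \<open>x0 may lie on the sphere, so the centre is pulled inwards.\<close>
  define s where "s = min (1/2) (\<eta>/2)"
  define y where "y = (1 - s) *\<^sub>R x0"
  define r where "r = min (\<eta>/4) (y $ k / 2)"
  have s: "0 < s" "s < 1" "s \<le> \<eta>/2"
    using \<open>0 < \<eta>\<close> by (auto simp: s_def)
  have "norm y \<le> 1 - s"
    using x0 s by (simp add: y_def mult_left_le)
  moreover have "0 < y $ k"
    using x0 s by (simp add: y_def)
  moreover have "dist y x0 \<le> s"
  proof -
    have "y - x0 = (- s) *\<^sub>R x0"
      by (simp add: y_def algebra_simps)
    thus ?thesis
      using x0 s by (simp add: dist_norm mult_left_le)
  qed
  moreover have "w x0 / 2 \<le> w z" if "dist y z \<le> r" for z
  proof -
    have "dist z x0 < \<eta>"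
      using dist_triangle[of z x0 y] that \<open>dist y x0 \<le> s\<close> s \<open>0 < \<eta>\<close>
      by (simp add: r_def dist_commute)
    moreover have "w x0 - w z \<le> dist (w z) (w x0)"
      by (simp add: dist_real_def)
    ultimately show ?thesis
      using \<eta>[of z] by linarith
  qed
  ultimately show thesis
    using \<open>0 < \<eta>\<close> \<open>0 < w x0\<close> s by (intro that[of y r "w x0 / 2"]) (auto simp: r_def)
qed

lemma hopf_barrier_below:
  assumes "0 < y $ k" and "0 < r" and "0 < m"
    and near_y: "\<And>z. dist y z \<le> r \<Longrightarrow> m \<le> w z"
    and \<beta>: "0 < \<beta>" "real CARD('n) + 2 \<le> \<beta> * r\<^sup>2" "1 \<le> \<beta> * (1 - norm y)"
    and x: "norm x \<le> 1" "0 \<le> x $ k" "r \<le> dist y x"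
  shows "m * hopf_barrier k \<beta> y x \<le> w x"
proof (rule comparison[of "- ball y r"])
  have interior_S: "interior (- ball y r) = - cball y r"
    using \<open>0 < r\<close> by (simp add: interior_complement)
  show "continuous_on UNIV (\<lambda>x. m * hopf_barrier k \<beta> y x)"
    unfolding hopf_barrier_def by (intro continuous_intros)
  show "m * hopf_barrier k \<beta> y z \<le> w z"
    if "norm z \<le> 1" "0 \<le> z $ k" "z $ k = 0 \<or> z \<notin> interior (- ball y r)" for z
  proof (cases "z $ k = 0")
    case True
    thus ?thesis
      using zero_on_flat that by (simp add: hopf_barrier_def)
  next
    case False
    hence "m \<le> w z"
      using that interior_S near_y by auto
    moreover have "m * hopf_barrier k \<beta> y z \<le> m"
      using hopf_barrier_le_1[of \<beta> z k y] that \<open>0 < \<beta>\<close> \<open>0 < m\<close> by (simp add: mult_left_le)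
    ultimately show ?thesis
      by linarith
  qed
  show "strictly_subharmonic_at (\<lambda>x. m * hopf_barrier k \<beta> y x) z"
    if "0 < z $ k" "z \<in> interior (- ball y r)" for z
  proof (intro strictly_subharmonic_at_cmult hopf_barrier_strictly_subharmonic)
    have "r < norm (z - y)"
      using that interior_S by (simp add: dist_norm norm_minus_commute)
    hence "\<beta> * r\<^sup>2 \<le> \<beta> * (norm (z - y))\<^sup>2"
      using \<open>0 < r\<close> \<open>0 < \<beta>\<close> by (intro mult_left_mono power_mono) auto
    thus "real CARD('n) + 2 \<le> 2 * \<beta> * (norm (z - y))\<^sup>2"
      using \<beta> by linarith
  qed (use that \<open>0 < m\<close> \<open>0 < \<beta>\<close> \<open>0 < y $ k\<close> in auto)
  show "\<exists>d<0. ((\<lambda>t. m * hopf_barrier k \<beta> y (z + t *\<^sub>R z)) has_real_derivative d) (at 0)"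
    if z: "norm z = 1" "0 < z $ k" for z
  proof -
    obtain d where "d < 0" "((\<lambda>t. hopf_barrier k \<beta> y (z + t *\<^sub>R z)) has_real_derivative d) (at 0)"
      using hopf_barrier_radial_DERIV_neg[OF z \<beta>(1,3)] by blast
    thus ?thesis
      using \<open>0 < m\<close> by (intro exI[of _ "m * d"]) (simp add: DERIV_cmult mult_pos_neg)
  qed
qed (use x in \<open>auto simp: dist_commute\<close>)

lemma positive_above_barrier:
  assumes "0 < m" and near_y: "\<And>z. dist y z \<le> r \<Longrightarrow> m \<le> w z"
    and barrier: "\<And>x. norm x \<le> 1 \<Longrightarrow> 0 \<le> x $ k \<Longrightarrow> r \<le> dist y x \<Longrightarrow>
                    m * hopf_barrier k \<beta> y x \<le> w x"
    and "norm x \<le> 1" and "0 < x $ k"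
  shows "0 < w x"
proof (cases "dist y x \<le> r")
  case True
  thus ?thesis
    using near_y \<open>0 < m\<close> by force
next
  case False
  have "0 < m * hopf_barrier k \<beta> y x"
    using \<open>0 < m\<close> \<open>0 < x $ k\<close> by (simp add: hopf_barrier_def)
  thus ?thesis
    using barrier[of x] False assms(4,5) by simp
qed

lemma pd_eq_derivative_towards_pole:
  assumes "norm p \<le> 1" and "p $ k = 0"
  shows "(\<Sum>i\<in>UNIV. pd i w p * (axis k 1 - p) $ i) = pd k w p"
proof -
  have "p \<in> U"
    using assms half_ball_subset by auto
  have "w (p + t *\<^sub>R p) = 0" if "-1 < t" "t \<le> 0" for t
  proof -
    have "p + t *\<^sub>R p = (1 + t) *\<^sub>R p"
      by (simp add: algebra_simps)
    hence "norm (p + t *\<^sub>R p) = (1 + t) * norm p"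
      using that by simp
    also have "\<dots> \<le> 1"
      using that assms by (simp add: mult_le_one)
    finally show ?thesis
      using zero_on_flat assms by simp
  qed
  hence "(\<Sum>i\<in>UNIV. pd i w p * p $ i) = 0"
    by (intro DERIV_eq_0_if_zero_on_left[OF C2_on_line_DERIV[OF C2 open_U \<open>p \<in> U\<close>], of 1]) auto
  moreover have "(\<Sum>i\<in>UNIV. pd i w p * (axis k 1 - p) $ i)
      = (\<Sum>i\<in>UNIV. pd i w p * axis k 1 $ i) - (\<Sum>i\<in>UNIV. pd i w p * p $ i)"
    by (simp add: right_diff_distrib sum_subtractf)
  moreover have "(\<Sum>i\<in>UNIV. pd i w p * axis k 1 $ i) = pd k w p"
    by (simp add: axis_def if_distrib sum.delta' cong: if_cong)
  ultimately show ?thesis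
    by simp
qed

text \<open>Hopf's lemma at p: w - m h vanishes at p and is nonnegative along the segment from p
  towards the pole e_k, which stays in the closed half ball outside the ball around y.\<close>
lemma hopf_normal_derivative_pos:
  assumes "0 < m" and "r < y $ k"
    and barrier: "\<And>x. norm x \<le> 1 \<Longrightarrow> 0 \<le> x $ k \<Longrightarrow> r \<le> dist y x \<Longrightarrow>
                    m * hopf_barrier k \<beta> y x \<le> w x"
    and p: "norm p \<le> 1" "p $ k = 0"
  shows "0 < pd k w p"
proof -
  define d where "d = axis k (1::real) - p"
  define \<delta> where "\<delta> = min 1 ((y $ k - r) / 2)"
  have "p \<in> U"
    using p half_ball_subset by auto
  have "((\<lambda>t. w (p + t *\<^sub>R d) - m * hopf_barrier k \<beta> y (p + t *\<^sub>R d)) has_real_derivative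
           pd k w p - m * exp (- \<beta> * (norm (p - y))\<^sup>2)) (at 0)"
    using C2_on_line_DERIV[OF C2 open_U \<open>p \<in> U\<close>, of d] hopf_barrier_line_DERIV[of k \<beta> y p d]
      pd_eq_derivative_towards_pole[OF p] p
    by (auto intro!: derivative_eq_intros simp: d_def)
  moreover have "w p - m * hopf_barrier k \<beta> y p \<le> w (p + t *\<^sub>R d) - m * hopf_barrier k \<beta> y (p + t *\<^sub>R d)"
    if "0 \<le> t" "t < \<delta>" for t
    using barrier[of "p + t *\<^sub>R d"] segment_towards_pole[OF p that(1), of y r] zero_on_flat p that
    by (simp add: d_def \<delta>_def hopf_barrier_def)
  ultimately have "0 \<le> pd k w p - m * exp (- \<beta> * (norm (p - y))\<^sup>2)"
    by (intro DERIV_nonneg_at_min_from_right[where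
          g = "\<lambda>t. w (p + t *\<^sub>R d) - m * hopf_barrier k \<beta> y (p + t *\<^sub>R d)" and \<delta> = \<delta>])
      (use assms(2) in \<open>auto simp: \<delta>_def\<close>)
  moreover have "0 < m * exp (- \<beta> * (norm (p - y))\<^sup>2)"
    using \<open>0 < m\<close> by simp
  ultimately show ?thesis
    by linarith
qed

end

lemma half_ball_supersolutionI:
  fixes w :: "real^'n::finite \<Rightarrow> real"
  assumes "open U" and "closure (Bplus k) \<subseteq> U" and "C2_on U w"
    and "\<forall>x\<in>Bplus k. - laplacian w x \<ge> 0"
    and "\<forall>x\<in>Sigma1 k. w x = 0"
    and "\<forall>x\<in>Sigma2 k. dir_deriv w (outward_normal x) x = 0"
  shows "half_ball_supersolution U w k"
proof
  show subset: "{x. norm x \<le> 1 \<and> 0 \<le> x $ k} \<subseteq> U"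
    using assms(2) by (simp add: closure_Bplus)
  show "((\<lambda>t. w (x + t *\<^sub>R x)) has_real_derivative 0) (at 0)" if "norm x = 1" "0 < x $ k" for x
  proof (rule radial_DERIV_of_outward_normal[OF assms(3,1)])
    show "x \<in> U"
      using subset that by auto
    show "dir_deriv w (outward_normal x) x = 0"
      using assms(6) that by (simp add: Sigma2_eq)
  qed (fact that(1))
qed (use assms in \<open>auto simp: Bplus_def Sigma1_eq\<close>)

theorem lemma9p2:
  fixes w :: "real^'n::finite \<Rightarrow> real" and k :: 'n and U :: "(real^'n) set"
  assumes "open U" and "closure (Bplus k) \<subseteq> U" and "C2_on U w"
    and "\<forall>x\<in>Bplus k. - laplacian w x \<ge> 0"
    and "\<forall>x\<in>Sigma1 k. w x = 0"
    and "\<forall>x\<in>Sigma2 k. dir_deriv w (outward_normal x) x = 0"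
    and "\<exists>x\<in>Bplus k. w x \<noteq> 0"
  shows "(\<forall>x\<in>Bplus k. w x > 0) \<and> (\<forall>x\<in>Sigma1 k. pd k w x > 0)"
proof -
  interpret half_ball_supersolution U w k
    using half_ball_supersolutionI[OF assms(1-6)] .
  obtain x0 where "x0 \<in> Bplus k" "w x0 \<noteq> 0"
    using assms(7) by blast
  then obtain y r m where y: "norm y < 1" "0 < y $ k" and "0 < r" "r < y $ k" "0 < m"
    and near_y: "\<And>z. dist y z \<le> r \<Longrightarrow> m \<le> w z"
    using positive_near_interior_point by blast
  obtain \<beta> where "0 < \<beta>" "real CARD('n) + 2 \<le> \<beta> * r\<^sup>2" "1 \<le> \<beta> * (1 - norm y)"
    using exists_large_factor[of "r\<^sup>2" "1 - norm y"] \<open>0 < r\<close> y(1) by auto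
  hence barrier: "\<And>x. norm x \<le> 1 \<Longrightarrow> 0 \<le> x $ k \<Longrightarrow> r \<le> dist y x \<Longrightarrow>
                    m * hopf_barrier k \<beta> y x \<le> w x"
    using hopf_barrier_below y(2) \<open>0 < r\<close> \<open>0 < m\<close> near_y by blast
  have "0 < w x" if "x \<in> Bplus k" for x
    using positive_above_barrier[where y = y and r = r and \<beta> = \<beta>] \<open>0 < m\<close> near_y barrier that
    by (simp add: Bplus_def)
  moreover have "0 < pd k w p" if "p \<in> Sigma1 k" for p
    using hopf_normal_derivative_pos[where y = y and r = r and \<beta> = \<beta>] \<open>0 < m\<close> \<open>r < y $ k\<close> barrier that
    by (simp add: Sigma1_eq)
  ultimately show ?thesis
    by blast
qed

end
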